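(* Let $k\ge1$, $m\ge1$, $h\ge0$ be fixed integers. For the random key graph $G(n,X_n,Y_n)$ with $X_n\ge2$ for all large $n$ and edge probability $q_n=\frac{\ln n+(k-1)\ln\ln n+\alpha_n}{n}$ with $\alpha_n=o(\ln n)$, let $N_i$ ($1\le i\le m$) be the set of nodes in $\{v_{m+1},\dots,v_n\}$ adjacent to $v_i$. Let $P_a$ be the probability of the event that (a) $S_i\cap S_j=\emptyset$ for all $1\le i<j\le m$, (b) $N_i\cap N_j=\emptyset$ for all $1\le i<j\le m$, and (c) $|N_i|=h$ for all $1\le i\le m$. Then $$P_a\sim (h!)^{-m}(nq_n)^{hm}e^{-mnq_n}\quad(n\to\infty).$$
   Context: The random key graph $G(n,X_n,Y_n)$ (with $1\le X_n\le Y_n$ integers depending on $n$) has node set $\{v_1,\dots,v_n\}$; each node $v_i$ is independently assigned a set $S_i$ of $X_n$ distinct objects chosen uniformly at random among all $X_n$-element subsets of a pool of $Y_n$ objects; an undirected edge joins $v_i$ and $v_j$ ($i\ne j$) iff $S_i\cap S_j\neq\emptyset$. The edge probability is $q_n=1-\binom{Y_n-X_n}{X_n}/\binom{Y_n}{X_n}$. $x_n\sim y_n$ means $x_n/y_n\to1$. *)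

theory Defs
  imports "HOL-Probability.Probability" "HOL-Library.Landau_Symbols"
begin

text \<open>Nodes v_1..v_n are indexed by 0..n-1 (v_i is index i-1);
  the key pool is {0..<Y}. A sample is a key assignment S with S i an X-subset of the pool
  for i < n; all assignments are equally likely (independent uniform choices).\<close>

definition key_sets :: "nat \<Rightarrow> nat \<Rightarrow> nat set set" where
  "key_sets X Y = {A. A \<subseteq> {..<Y} \<and> card A = X}"

definition key_space :: "nat \<Rightarrow> nat \<Rightarrow> nat \<Rightarrow> (nat \<Rightarrow> nat set) set" where
  "key_space n X Y = PiE {..<n} (\<lambda>_. key_sets X Y)"

definition rkg_dist :: "nat \<Rightarrow> nat \<Rightarrow> nat \<Rightarrow> (nat \<Rightarrow> nat set) pmf" where
  "rkg_dist n X Y = pmf_of_set (key_space n X Y)"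

definition rkg_edge_prob :: "nat \<Rightarrow> nat \<Rightarrow> real" where
  "rkg_edge_prob X Y = 1 - real ((Y - X) choose X) / real (Y choose X)"

text \<open>N_i: nodes among v_{m+1},...,v_n (indices m..n-1) adjacent to v_i (index i).\<close>
definition rkg_nbhd :: "nat \<Rightarrow> nat \<Rightarrow> (nat \<Rightarrow> nat set) \<Rightarrow> nat \<Rightarrow> nat set" where
  "rkg_nbhd n m S i = {j \<in> {m..<n}. S i \<inter> S j \<noteq> {}}"

definition rkg_event :: "nat \<Rightarrow> nat \<Rightarrow> nat \<Rightarrow> (nat \<Rightarrow> nat set) set" where
  "rkg_event n m h = {S.
      (\<forall>i<m. \<forall>j<m. i < j \<longrightarrow> S i \<inter> S j = {}) \<and>
      (\<forall>i<m. \<forall>j<m. i < j \<longrightarrow> rkg_nbhd n m S i \<inter> rkg_nbhd n m S j = {}) \<and>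
      (\<forall>i<m. card (rkg_nbhd n m S i) = h)}"

end

theory Submission
  imports Defs "HOL-Real_Asymp.Real_Asymp"
begin

text \<open>Condition on the key sets \<open>T\<close> of \<open>v\<^sub>1, \<dots>, v\<^sub>m\<close>, which must be pairwise
  disjoint, and on the neighbourhoods \<open>N\<^sub>1, \<dots>, N\<^sub>m\<close>, which must be pairwise disjoint
  \<open>h\<close>-sets. Given both, the remaining key sets are independent: a node of \<open>N\<^sub>i\<close> must
  meet \<open>T\<^sub>i\<close> and no other \<open>T\<^sub>j\<close>, any other node must avoid all of them. With
  \<open>r(a) = C(Y - a, X) / C(Y, X)\<close>, the probability of avoiding a fixed \<open>a\<close>-set, this gives
  exactly
  \<open>P\<^sub>a = (\<Prod>i<m. r(iX)) \<cdot> F \<cdot> (r((m-1)X) - r(mX))\<^bsup>hm\<^esup> \<cdot> r(mX)\<^bsup>n-m-hm\<^esup>\<close>, where \<open>F\<close> counts the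
  sequences of \<open>m\<close> pairwise disjoint \<open>h\<close>-subsets of \<open>{v\<^sub>m\<^sub>+\<^sub>1, \<dots>, v\<^sub>n}\<close>.
  Negative correlation and inclusion--exclusion give \<open>1 - iq \<le> r(iX) \<le> (1 - q)\<^sup>i\<close>, so each
  factor is asymptotic to its counterpart in \<open>(nq)\<^bsup>hm\<^esup> / (h!)\<^sup>m \<cdot> e\<^bsup>-mnq\<^esup>\<close> as soon as
  \<open>q \<rightarrow> 0\<close> and \<open>nq\<^sup>2 \<rightarrow> 0\<close>; both follow from \<open>q\<^sub>n = O(ln n / n)\<close>.\<close>

section \<open>Counting key sets\<close>

lemma finite_key_sets: "finite (key_sets X Y)"
  unfolding key_sets_def by (rule finite_subset[of _ "Pow {..<Y}"]) auto

lemma card_key_sets: "card (key_sets X Y) = Y choose X"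
  unfolding key_sets_def using n_subsets[of "{..<Y}" X] by simp

lemma card_subsets_avoiding:
  assumes "finite A" and "U \<subseteq> A"
  shows "card {B. B \<subseteq> A \<and> card B = k \<and> B \<inter> U = {}} = (card A - card U) choose k"
proof -
  have "{B. B \<subseteq> A \<and> card B = k \<and> B \<inter> U = {}} = {B. B \<subseteq> A - U \<and> card B = k}"
    by blast
  then show ?thesis
    using assms by (simp add: n_subsets card_Diff_subset finite_subset)
qed

lemma card_key_sets_avoiding:
  "U \<subseteq> {..<Y} \<Longrightarrow> card {B \<in> key_sets X Y. B \<inter> U = {}} = (Y - card U) choose X"
  using card_subsets_avoiding[of "{..<Y}" U X] unfolding key_sets_def by (simp add: conj_assoc)

lemma binomial_mult_fact: "(n choose k) * fact k = (\<Prod>i<k. n - i)"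
proof (induction k)
  case (Suc k)
  have "(n choose Suc k) * fact (Suc k) = ((n choose Suc k) * Suc k) * fact k"
    by (simp add: algebra_simps)
  also have "(n choose Suc k) * Suc k = (n choose k) * (n - k)"
    by (metis binomial_absorb_comp binomial_absorption mult.commute)
  finally show ?case using Suc by (simp add: algebra_simps)
qed simp

lemma diff_diff_mult_le: "((z::nat) - a - b) * z \<le> (z - a) * (z - b)"
proof (cases "a + b \<le> z")
  case True
  then obtain w where "z = a + b + w" by (metis le_Suc_ex)
  then show ?thesis by (simp add: algebra_simps)
qed simp

text \<open>Avoiding disjoint sets of sizes \<open>a\<close> and \<open>b\<close> is negatively correlated; compare
  the falling factorials of both sides factor by factor.\<close>
lemma binomial_diff_diff_submult:
  "((Y - a - b) choose X) * (Y choose X) \<le> ((Y - a) choose X) * ((Y - b) choose X)"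
proof -
  have "((Y - a - b) choose X) * (Y choose X) * (fact X * fact X)
     = (\<Prod>i<X. (Y - a - b) - i) * (\<Prod>i<X. Y - i)"
    by (metis binomial_mult_fact mult.assoc mult.left_commute)
  also have "\<dots> = (\<Prod>i<X. (Y - i - a - b) * (Y - i))"
    unfolding prod.distrib[symmetric] by (intro arg_cong2[where f="(*)"] prod.cong) auto
  also have "\<dots> \<le> (\<Prod>i<X. (Y - i - a) * (Y - i - b))"
    by (intro prod_mono conjI zero_le diff_diff_mult_le)
  also have "\<dots> = (\<Prod>i<X. (Y - a) - i) * (\<Prod>i<X. (Y - b) - i)"
    unfolding prod.distrib[symmetric] by (intro prod.cong) (auto simp: add.commute)
  also have "\<dots> = ((Y - a) choose X) * ((Y - b) choose X) * (fact X * fact X)"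
    by (metis binomial_mult_fact mult.assoc mult.left_commute)
  finally show ?thesis by simp
qed

text \<open>Inclusion--exclusion for the \<open>X\<close>-subsets avoiding \<open>{..<a}\<close> and \<open>{a..<a+b}\<close>.\<close>
lemma binomial_diff_add_le:
  assumes "a + b \<le> Y"
  shows "((Y - a) choose X) + ((Y - b) choose X) \<le> ((Y - a - b) choose X) + (Y choose X)"
proof -
  let ?avoiding = "\<lambda>U. {B \<in> key_sets X Y. B \<inter> U = {}}"
  have fin: "finite (?avoiding U)" for U using finite_key_sets by simp
  have "?avoiding {..<a} \<inter> ?avoiding {a..<a+b} = ?avoiding {..<a+b}"
    by (auto simp: disjoint_iff)
  then have "card (?avoiding {..<a} \<union> ?avoiding {a..<a+b}) + card (?avoiding {..<a+b})
      = card (?avoiding {..<a}) + card (?avoiding {a..<a+b})"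
    using card_Un_Int[OF fin fin] by simp
  moreover have "card (?avoiding {..<a} \<union> ?avoiding {a..<a+b}) \<le> Y choose X"
    by (metis (no_types, lifting) Un_subset_iff card_key_sets card_mono finite_key_sets mem_Collect_eq subsetI)
  moreover have "card (?avoiding {..<a}) = (Y - a) choose X"
    "card (?avoiding {a..<a+b}) = (Y - b) choose X"
    "card (?avoiding {..<a+b}) = (Y - a - b) choose X"
    using assms by (simp_all add: card_key_sets_avoiding subset_eq)
  ultimately show ?thesis by linarith
qed

section \<open>Disjoint families of subsets\<close>

definition disjoint_subset_families :: "nat \<Rightarrow> nat \<Rightarrow> 'a set \<Rightarrow> (nat \<Rightarrow> 'a set) set" where
  "disjoint_subset_families m k A =
     {F \<in> {..<m} \<rightarrow>\<^sub>E {B. B \<subseteq> A \<and> card B = k}. disjoint_family_on F {..<m}}"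

lemma finite_disjoint_subset_families:
  assumes "finite A"
  shows "finite (disjoint_subset_families m k A)"
proof -
  have "finite ({..<m} \<rightarrow>\<^sub>E {B. B \<subseteq> A \<and> card B = k})"
    using assms by (intro finite_PiE) auto
  then show ?thesis unfolding disjoint_subset_families_def by simp
qed

lemma card_Union_disjoint_subset_family:
  assumes F: "F \<in> disjoint_subset_families m k A" and I: "I \<subseteq> {..<m}" and A: "finite A"
  shows "card (\<Union>i\<in>I. F i) = card I * k"
proof -
  have members: "F i \<subseteq> A \<and> card (F i) = k" if "i \<in> I" for i
    using F I that unfolding disjoint_subset_families_def by auto
  have "disjoint_family_on F I"
    using F I unfolding disjoint_subset_families_def by (auto intro: disjoint_family_on_mono)
  moreover have "finite (F i)" if "i \<in> I" for i
    using members[OF that] A finite_subset by blast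
  moreover have "finite I"
    using I by (rule finite_subset) simp
  ultimately have "card (\<Union>i\<in>I. F i) = (\<Sum>i\<in>I. card (F i))"
    unfolding disjoint_family_on_def by (intro card_UN_disjoint) auto
  also have "\<dots> = card I * k"
    using members by simp
  finally show ?thesis .
qed

lemma disjoint_subset_families_Suc:
  "disjoint_subset_families (Suc m) k A =
     (\<lambda>(F, B). F(m := B)) ` (SIGMA F:disjoint_subset_families m k A.
        {B. B \<subseteq> A \<and> card B = k \<and> B \<inter> (\<Union>i<m. F i) = {}})"
  (is "?L = (\<lambda>(F, B). F(m := B)) ` ?S")
proof (intro equalityI subsetI)
  fix F' assume F': "F' \<in> ?L"
  have mem: "(restrict F' {..<m}, F' m) \<in> ?S"
    using F' unfolding disjoint_subset_families_def disjoint_family_on_def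
    by (auto simp: PiE_def Pi_def) (metis disjoint_iff lessThan_iff less_Suc_eq less_irrefl)
  moreover have eq: "F' = (restrict F' {..<m})(m := F' m)"
    using F' unfolding disjoint_subset_families_def
    by (auto simp: PiE_def extensional_def fun_eq_iff)
  ultimately show "F' \<in> (\<lambda>(F, B). F(m := B)) ` ?S"
    by (metis (mono_tags) case_prod_conv rev_image_eqI)
next
  fix F' assume "F' \<in> (\<lambda>(F, B). F(m := B)) ` ?S"
  then obtain F B where F: "F \<in> disjoint_subset_families m k A"
    and B: "B \<subseteq> A" "card B = k" "B \<inter> (\<Union>i<m. F i) = {}" and F': "F' = F(m := B)"
    by auto
  have "F' \<in> {..<Suc m} \<rightarrow>\<^sub>E {B. B \<subseteq> A \<and> card B = k}"
    using F B unfolding F' disjoint_subset_families_def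
    by (auto simp: PiE_def Pi_def extensional_def less_Suc_eq)
  moreover have "disjoint_family_on F' {..<Suc m}"
    using F B unfolding F' disjoint_subset_families_def
    by (simp add: lessThan_Suc disjoint_family_on_insert) (simp add: disjoint_family_on_def)
  ultimately show "F' \<in> ?L"
    unfolding disjoint_subset_families_def by simp
qed

lemma card_disjoint_subset_families:
  assumes "finite A"
  shows "card (disjoint_subset_families m k A) = (\<Prod>i<m. (card A - i * k) choose k)"
proof (induction m)
  case 0
  then show ?case by (simp add: disjoint_subset_families_def disjoint_family_on_def)
next
  case (Suc m)
  let ?avoiding = "\<lambda>F. {B. B \<subseteq> A \<and> card B = k \<and> B \<inter> (\<Union>i<m. F i) = {}}"
  have "inj_on (\<lambda>(F, B). F(m := B)) (SIGMA F:disjoint_subset_families m k A. ?avoiding F)"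
    by (rule inj_on_inverseI[where g = "\<lambda>F'. (restrict F' {..<m}, F' m)"])
      (auto simp: disjoint_subset_families_def PiE_def extensional_def fun_eq_iff)
  then have "card (disjoint_subset_families (Suc m) k A)
      = card (SIGMA F:disjoint_subset_families m k A. ?avoiding F)"
    unfolding disjoint_subset_families_Suc by (rule card_image)
  also have "\<dots> = (\<Sum>F\<in>disjoint_subset_families m k A. card (?avoiding F))"
    using assms by (intro card_SigmaI finite_disjoint_subset_families) auto
  also have "\<dots> = (\<Sum>F\<in>disjoint_subset_families m k A. (card A - m * k) choose k)"
  proof (intro sum.cong refl)
    fix F assume F: "F \<in> disjoint_subset_families m k A"
    then have "(\<Union>i<m. F i) \<subseteq> A"
      unfolding disjoint_subset_families_def by auto
    then show "card (?avoiding F) = (card A - m * k) choose k"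
      using assms card_Union_disjoint_subset_family[OF F, of "{..<m}"]
      by (simp add: card_subsets_avoiding)
  qed
  finally show ?case using Suc by simp
qed

section \<open>Exact probability of the event\<close>

text \<open>The key assignments in the event whose key sets on \<open>v\<^sub>1, \<dots>, v\<^sub>m\<close> are \<open>T\<close> and whose
  neighbourhoods are \<open>N\<^sub>i = N i\<close> (see \<open>rkg_event_eq_Union_fibres\<close>).\<close>
definition rkg_fibre ::
    "nat \<Rightarrow> nat \<Rightarrow> nat \<Rightarrow> nat \<Rightarrow> (nat \<Rightarrow> nat set) \<Rightarrow> (nat \<Rightarrow> nat set) \<Rightarrow> (nat \<Rightarrow> nat set) set" where
  "rkg_fibre n X Y m T N = (\<Pi>\<^sub>E j\<in>{..<n}. if j < m then {T j}
      else {B \<in> key_sets X Y. {i. i < m \<and> T i \<inter> B \<noteq> {}} = {i. i < m \<and> j \<in> N i}})"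

lemma rkg_fibre_apply_low:
  "S \<in> rkg_fibre n X Y m T N \<Longrightarrow> j < m \<Longrightarrow> m \<le> n \<Longrightarrow> S j = T j"
  unfolding rkg_fibre_def by (drule PiE_mem[of _ _ _ j]) auto

lemma rkg_fibre_apply_high:
  "S \<in> rkg_fibre n X Y m T N \<Longrightarrow> j \<in> {m..<n} \<Longrightarrow>
    S j \<in> key_sets X Y \<and> {i. i < m \<and> T i \<inter> S j \<noteq> {}} = {i. i < m \<and> j \<in> N i}"
  unfolding rkg_fibre_def by (drule PiE_mem[of _ _ _ j]) auto

lemma rkg_nbhd_of_fibre:
  assumes S: "S \<in> rkg_fibre n X Y m T N" and N: "N \<in> disjoint_subset_families m h {m..<n}"
    and i: "i < m" and mn: "m \<le> n"
  shows "rkg_nbhd n m S i = N i"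
proof -
  have "S i \<inter> S j \<noteq> {} \<longleftrightarrow> j \<in> N i" if "j \<in> {m..<n}" for j
    using rkg_fibre_apply_low[OF S i mn] rkg_fibre_apply_high[OF S that] i by blast
  moreover have "N i \<subseteq> {m..<n}"
    using N i unfolding disjoint_subset_families_def by auto
  ultimately show ?thesis
    unfolding rkg_nbhd_def by fastforce
qed

lemma rkg_fibre_determines:
  assumes S: "S \<in> rkg_fibre n X Y m T N" and T: "T \<in> disjoint_subset_families m X {..<Y}"
    and N: "N \<in> disjoint_subset_families m h {m..<n}" and mn: "m \<le> n"
  shows "T = restrict S {..<m} \<and> N = (\<lambda>i\<in>{..<m}. rkg_nbhd n m S i)"
  using T N rkg_fibre_apply_low[OF S _ mn] rkg_nbhd_of_fibre[OF S N _ mn]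
  unfolding disjoint_subset_families_def by (auto simp: PiE_def extensional_def fun_eq_iff)

lemma rkg_event_eq_Union_fibres:
  assumes mn: "m \<le> n"
  shows "key_space n X Y \<inter> rkg_event n m h =
    (\<Union>(T, N) \<in> disjoint_subset_families m X {..<Y} \<times> disjoint_subset_families m h {m..<n}.
       rkg_fibre n X Y m T N)"
proof (intro equalityI subsetI)
  fix S assume "S \<in> key_space n X Y \<inter> rkg_event n m h"
  then have S: "S \<in> {..<n} \<rightarrow>\<^sub>E key_sets X Y"
    and a: "\<forall>i<m. \<forall>j<m. i < j \<longrightarrow> S i \<inter> S j = {}"
    and b: "\<forall>i<m. \<forall>j<m. i < j \<longrightarrow> rkg_nbhd n m S i \<inter> rkg_nbhd n m S j = {}"
    and c: "\<forall>i<m. card (rkg_nbhd n m S i) = h"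
    unfolding key_space_def rkg_event_def by auto
  define T where "T = restrict S {..<m}"
  define N where "N = (\<lambda>i\<in>{..<m}. rkg_nbhd n m S i)"
  have "disjoint_family_on T {..<m}" "disjoint_family_on N {..<m}"
    using a b unfolding T_def N_def disjoint_family_on_def
    by (metis Int_commute lessThan_iff linorder_neqE_nat restrict_apply')+
  moreover have "T \<in> {..<m} \<rightarrow>\<^sub>E {B. B \<subseteq> {..<Y} \<and> card B = X}"
    using S mn unfolding T_def key_sets_def by (auto simp: PiE_iff)
  moreover have "N \<in> {..<m} \<rightarrow>\<^sub>E {B. B \<subseteq> {m..<n} \<and> card B = h}"
    using c unfolding N_def rkg_nbhd_def by (auto simp: PiE_iff)
  moreover have "S \<in> rkg_fibre n X Y m T N"
    using S mn unfolding rkg_fibre_def T_def N_def rkg_nbhd_def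
    by (auto simp: PiE_iff Int_commute)
  ultimately show "S \<in> (\<Union>(T, N) \<in> disjoint_subset_families m X {..<Y} \<times>
      disjoint_subset_families m h {m..<n}. rkg_fibre n X Y m T N)"
    unfolding disjoint_subset_families_def by blast
next
  fix S assume "S \<in> (\<Union>(T, N) \<in> disjoint_subset_families m X {..<Y} \<times>
      disjoint_subset_families m h {m..<n}. rkg_fibre n X Y m T N)"
  then obtain T N where S: "S \<in> rkg_fibre n X Y m T N"
    and T: "T \<in> disjoint_subset_families m X {..<Y}" and N: "N \<in> disjoint_subset_families m h {m..<n}"
    by blast
  have "S j \<in> key_sets X Y" if "j < n" for j
  proof (cases "j < m")
    case True
    then show ?thesis
      using T rkg_fibre_apply_low[OF S True mn]
      unfolding disjoint_subset_families_def key_sets_def by auto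
  qed (use rkg_fibre_apply_high[OF S] that in auto)
  moreover have "S \<in> extensional {..<n}"
    using S unfolding rkg_fibre_def by (simp add: PiE_iff)
  moreover have "S \<in> rkg_event n m h"
    using T N rkg_fibre_apply_low[OF S _ mn] rkg_nbhd_of_fibre[OF S N _ mn]
    unfolding rkg_event_def disjoint_subset_families_def disjoint_family_on_def by auto
  ultimately show "S \<in> key_space n X Y \<inter> rkg_event n m h"
    unfolding key_space_def by (auto simp: PiE_iff)
qed

lemma card_key_sets_meeting_none:
  assumes T: "T \<in> disjoint_subset_families m X {..<Y}"
  shows "card {B \<in> key_sets X Y. {i. i < m \<and> T i \<inter> B \<noteq> {}} = {}} = (Y - m * X) choose X"
proof -
  have "{B \<in> key_sets X Y. {i. i < m \<and> T i \<inter> B \<noteq> {}} = {}}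
      = {B \<in> key_sets X Y. B \<inter> (\<Union>i<m. T i) = {}}"
    by auto
  moreover have "(\<Union>i<m. T i) \<subseteq> {..<Y}"
    using T unfolding disjoint_subset_families_def by auto
  moreover have "card (\<Union>i<m. T i) = m * X"
    using card_Union_disjoint_subset_family[OF T] by simp
  ultimately show ?thesis
    by (simp add: card_key_sets_avoiding)
qed

lemma card_key_sets_meeting_only:
  assumes T: "T \<in> disjoint_subset_families m X {..<Y}" and i: "i < m"
  shows "card {B \<in> key_sets X Y. {i'. i' < m \<and> T i' \<inter> B \<noteq> {}} = {i}}
       = ((Y - (m - 1) * X) choose X) - ((Y - m * X) choose X)"
proof -
  let ?avoiding = "\<lambda>I. {B \<in> key_sets X Y. B \<inter> (\<Union>i'\<in>I. T i') = {}}"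
  have card_avoiding: "card (?avoiding I) = (Y - card I * X) choose X" if "I \<subseteq> {..<m}" for I
  proof -
    have "(\<Union>i'\<in>I. T i') \<subseteq> {..<Y}"
      using T that unfolding disjoint_subset_families_def by auto
    then show ?thesis
      using card_Union_disjoint_subset_family[OF T that] by (simp add: card_key_sets_avoiding)
  qed
  have "{B \<in> key_sets X Y. {i'. i' < m \<and> T i' \<inter> B \<noteq> {}} = {i}}
      = ?avoiding ({..<m} - {i}) - ?avoiding {..<m}"
    using i by auto
  moreover have "?avoiding {..<m} \<subseteq> ?avoiding ({..<m} - {i})"
    by auto
  ultimately show ?thesis
    using i card_avoiding[of "{..<m}"] card_avoiding[of "{..<m} - {i}"]
    by (simp add: card_Diff_subset finite_key_sets)
qed

lemma card_rkg_fibre: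
  assumes mn: "m \<le> n" and T: "T \<in> disjoint_subset_families m X {..<Y}"
    and N: "N \<in> disjoint_subset_families m h {m..<n}"
  shows "card (rkg_fibre n X Y m T N) =
    (((Y - (m - 1) * X) choose X) - ((Y - m * X) choose X)) ^ (h * m)
    * ((Y - m * X) choose X) ^ (n - m - h * m)"
proof -
  let ?meet_one = "((Y - (m - 1) * X) choose X) - ((Y - m * X) choose X)"
  let ?meet_none = "(Y - m * X) choose X"
  let ?U = "\<Union>i<m. N i"
  let ?c = "\<lambda>j. card {B \<in> key_sets X Y. {i. i < m \<and> T i \<inter> B \<noteq> {}} = {i. i < m \<and> j \<in> N i}}"
  have U: "?U \<subseteq> {m..<n}" "card ?U = h * m"
    using N card_Union_disjoint_subset_family[OF N]
    unfolding disjoint_subset_families_def by (auto simp: mult.commute)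
  have c: "?c j = (if j \<in> ?U then ?meet_one else ?meet_none)" for j
  proof (cases "j \<in> ?U")
    case True
    then obtain i where i: "i < m" "j \<in> N i" by blast
    have "i' = i" if "i' < m" "j \<in> N i'" for i'
    proof (rule ccontr)
      assume "i' \<noteq> i"
      then have "N i' \<inter> N i = {}"
        using N that(1) i(1) unfolding disjoint_subset_families_def disjoint_family_on_def by auto
      with that(2) i(2) show False by blast
    qed
    then have "{i'. i' < m \<and> j \<in> N i'} = {i}"
      using i by blast
    then show ?thesis
      using True card_key_sets_meeting_only[OF T i(1)] by simp
  next
    case False
    then have "{i'. i' < m \<and> j \<in> N i'} = {}" by auto
    with False show ?thesis
      by (simp only: if_False card_key_sets_meeting_none[OF T])
  qed
  have high: "(\<Prod>j\<in>{m..<n}. ?c j) = ?meet_one ^ (h * m) * ?meet_none ^ (n - m - h * m)"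
  proof -
    have "{m..<n} \<inter> {j. j \<in> ?U} = ?U" "{m..<n} \<inter> - {j. j \<in> ?U} = {m..<n} - ?U"
      using U(1) by blast+
    moreover have "card ({m..<n} - ?U) = n - m - h * m"
      using U(2) card_Diff_subset[OF finite_subset[OF U(1)] U(1)] by simp
    ultimately show ?thesis
      unfolding c prod.If_cases[OF finite_atLeastLessThan] using U(2) by simp
  qed
  have "{..<n} = {..<m} \<union> {m..<n}" "{..<m} \<inter> {m..<n} = {}"
    using mn by auto
  then have "card (rkg_fibre n X Y m T N) = (\<Prod>j<m. card {T j}) * (\<Prod>j\<in>{m..<n}. ?c j)"
    unfolding rkg_fibre_def card_PiE[OF finite_lessThan] by (simp add: prod.union_disjoint)
  then show ?thesis
    using high by simp
qed

lemma card_rkg_event: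
  assumes mn: "m \<le> n"
  shows "card (key_space n X Y \<inter> rkg_event n m h) =
    card (disjoint_subset_families m X {..<Y}) * card (disjoint_subset_families m h {m..<n})
    * ((((Y - (m - 1) * X) choose X) - ((Y - m * X) choose X)) ^ (h * m)
       * ((Y - m * X) choose X) ^ (n - m - h * m))"
proof -
  let ?P = "disjoint_subset_families m X {..<Y} \<times> disjoint_subset_families m h {m..<n}"
  have "card (key_space n X Y \<inter> rkg_event n m h)
      = (\<Sum>p\<in>?P. card (rkg_fibre n X Y m (fst p) (snd p)))"
    unfolding rkg_event_eq_Union_fibres[OF mn] case_prod_beta'
  proof (rule card_UN_disjoint')
    show "finite ?P"
      by (simp add: finite_disjoint_subset_families)
    show "finite (rkg_fibre n X Y m (fst p) (snd p))" for p
      unfolding rkg_fibre_def by (intro finite_PiE) (auto simp: finite_key_sets)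
    show "disjoint_family_on (\<lambda>p. rkg_fibre n X Y m (fst p) (snd p)) ?P"
      unfolding disjoint_family_on_def
      by (auto dest: rkg_fibre_determines[OF _ _ _ mn] simp: prod_eq_iff)
  qed
  also have "\<dots> = (\<Sum>p\<in>?P. (((Y - (m - 1) * X) choose X) - ((Y - m * X) choose X)) ^ (h * m)
       * ((Y - m * X) choose X) ^ (n - m - h * m))"
    by (intro sum.cong refl) (auto simp: card_rkg_fibre[OF mn])
  finally show ?thesis
    by (simp add: card_cartesian_product)
qed

text \<open>The probability that a uniformly random key set misses a fixed set of \<open>a\<close> keys.\<close>
definition key_avoid_prob :: "nat \<Rightarrow> nat \<Rightarrow> nat \<Rightarrow> real" where
  "key_avoid_prob X Y a = real ((Y - a) choose X) / real (Y choose X)"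

lemma prob_rkg_event:
  assumes XY: "X \<le> Y" and n: "m + h * m \<le> n"
  shows "measure_pmf.prob (rkg_dist n X Y) (rkg_event n m h) =
    (\<Prod>i<m. key_avoid_prob X Y (i * X)) * real (card (disjoint_subset_families m h {m..<n}))
    * (key_avoid_prob X Y ((m - 1) * X) - key_avoid_prob X Y (m * X)) ^ (h * m)
    * key_avoid_prob X Y (m * X) ^ (n - m - h * m)"
proof -
  let ?c = "real (Y choose X)"
  define meet_one where "meet_one = ((Y - (m - 1) * X) choose X) - ((Y - m * X) choose X)"
  define meet_none where "meet_none = (Y - m * X) choose X"
  have c: "?c > 0"
    using XY by simp
  have "{..<X} \<in> key_sets X Y"
    using XY unfolding key_sets_def by auto
  then have "key_space n X Y \<noteq> {}"
    unfolding key_space_def by (auto simp: PiE_eq_empty_iff)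
  moreover have "finite (key_space n X Y)"
    unfolding key_space_def by (intro finite_PiE finite_key_sets) auto
  moreover have "card (key_space n X Y) = (Y choose X) ^ n"
    unfolding key_space_def by (simp add: card_PiE card_key_sets)
  ultimately have "measure_pmf.prob (rkg_dist n X Y) (rkg_event n m h)
      = real (card (key_space n X Y \<inter> rkg_event n m h)) / ?c ^ n"
    unfolding rkg_dist_def by (simp add: measure_pmf_of_set)
  also have "\<dots> = real (card (disjoint_subset_families m X {..<Y})) / ?c ^ m
      * real (card (disjoint_subset_families m h {m..<n}))
      * (real meet_one / ?c) ^ (h * m) * (real meet_none / ?c) ^ (n - m - h * m)"
  proof -
    have "?c ^ n = ?c ^ m * ?c ^ (h * m) * ?c ^ (n - m - h * m)"
      using n by (simp flip: power_add)
    then show ?thesis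
      unfolding card_rkg_event[OF order.trans[OF le_add1 n]]
      unfolding meet_one_def[symmetric] unfolding meet_none_def[symmetric]
      using c by (simp add: power_divide)
  qed
  also have "real (card (disjoint_subset_families m X {..<Y})) / ?c ^ m
      = (\<Prod>i<m. key_avoid_prob X Y (i * X))"
    unfolding key_avoid_prob_def card_disjoint_subset_families[OF finite_lessThan]
    by (simp add: prod_dividef)
  also have "real meet_one / ?c = key_avoid_prob X Y ((m - 1) * X) - key_avoid_prob X Y (m * X)"
  proof -
    have "(Y - m * X) choose X \<le> (Y - (m - 1) * X) choose X"
      by (intro binomial_right_mono diff_le_mono2 mult_le_mono1) simp
    then show ?thesis
      unfolding meet_one_def key_avoid_prob_def by (simp add: of_nat_diff diff_divide_distrib)
  qed
  also have "real meet_none / ?c = key_avoid_prob X Y (m * X)"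
    unfolding meet_none_def key_avoid_prob_def ..
  finally show ?thesis .
qed

section \<open>Bounds on avoidance probabilities\<close>

context
  fixes X Y :: nat
  assumes X_le_Y: "X \<le> Y"
begin

lemma key_avoid_prob_0: "key_avoid_prob X Y 0 = 1"
  using X_le_Y by (simp add: key_avoid_prob_def)

lemma key_avoid_prob_key_size: "key_avoid_prob X Y X = 1 - rkg_edge_prob X Y"
  by (simp add: key_avoid_prob_def rkg_edge_prob_def)

lemma key_avoid_prob_nonneg: "0 \<le> key_avoid_prob X Y a"
  by (simp add: key_avoid_prob_def)

lemma key_avoid_prob_antimono: "a \<le> b \<Longrightarrow> key_avoid_prob X Y b \<le> key_avoid_prob X Y a"
  unfolding key_avoid_prob_def
  by (intro divide_right_mono) (simp_all add: binomial_right_mono)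

lemma key_avoid_prob_le_1: "key_avoid_prob X Y a \<le> 1"
  using key_avoid_prob_antimono[of 0 a] by (simp add: key_avoid_prob_0)

lemma key_avoid_prob_add_le_mult:
  "key_avoid_prob X Y (a + b) \<le> key_avoid_prob X Y a * key_avoid_prob X Y b"
proof -
  have "real ((Y - (a + b)) choose X) * real (Y choose X)
      \<le> real ((Y - a) choose X) * real ((Y - b) choose X)"
    using binomial_diff_diff_submult[of Y a b X] by (simp flip: of_nat_mult diff_diff_left)
  then show ?thesis
    using X_le_Y unfolding key_avoid_prob_def by (simp add: field_simps)
qed

lemma key_avoid_prob_add_ge:
  assumes "a + b \<le> Y"
  shows "key_avoid_prob X Y a + key_avoid_prob X Y b \<le> 1 + key_avoid_prob X Y (a + b)"
proof -
  let ?c = "real (Y choose X)"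
  have "real ((Y - a) choose X) + real ((Y - b) choose X) \<le> real ((Y - (a + b)) choose X) + ?c"
    using binomial_diff_add_le[OF assms, of X] by (simp flip: of_nat_add)
  then have "(real ((Y - a) choose X) + real ((Y - b) choose X)) / ?c
      \<le> (real ((Y - (a + b)) choose X) + ?c) / ?c"
    by (rule divide_right_mono) simp
  then show ?thesis
    using X_le_Y unfolding key_avoid_prob_def by (simp add: add_divide_distrib)
qed

lemma key_avoid_prob_mult_le_power: "key_avoid_prob X Y (a * i) \<le> key_avoid_prob X Y a ^ i"
proof (induction i)
  case (Suc i)
  have "key_avoid_prob X Y (a * Suc i) \<le> key_avoid_prob X Y a * key_avoid_prob X Y (a * i)"
    using key_avoid_prob_add_le_mult[of a "a * i"] by simp
  also have "\<dots> \<le> key_avoid_prob X Y a * key_avoid_prob X Y a ^ i"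
    using Suc key_avoid_prob_nonneg by (simp add: mult_left_mono)
  finally show ?case by simp
qed (simp add: key_avoid_prob_0)

lemma key_avoid_prob_upper: "key_avoid_prob X Y (i * X) \<le> (1 - rkg_edge_prob X Y) ^ i"
  using key_avoid_prob_mult_le_power[of X i] by (simp add: mult.commute key_avoid_prob_key_size)

lemma key_avoid_prob_lower:
  "i * X \<le> Y \<Longrightarrow> 1 - real i * rkg_edge_prob X Y \<le> key_avoid_prob X Y (i * X)"
proof (induction i)
  case (Suc i)
  then have "1 - real i * rkg_edge_prob X Y \<le> key_avoid_prob X Y (i * X)"
    by simp
  moreover have "key_avoid_prob X Y (i * X) + key_avoid_prob X Y X \<le> 1 + key_avoid_prob X Y (i * X + X)"
    using Suc.prems by (intro key_avoid_prob_add_ge) simp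
  ultimately show ?case
    by (simp add: key_avoid_prob_key_size algebra_simps)
qed (simp add: key_avoid_prob_0)

lemma rkg_edge_prob_ge:
  assumes "1 \<le> X"
  shows "real X / real Y \<le> rkg_edge_prob X Y"
proof -
  have Y: "0 < Y" using assms X_le_Y by simp
  have "(Y - X) * (Y choose X) = Y * ((Y - 1) choose X)"
    by (rule binomial_absorb_comp)
  then have "key_avoid_prob X Y 1 = (real Y - real X) / real Y"
    using X_le_Y Y unfolding key_avoid_prob_def
    by (simp add: field_simps flip: of_nat_mult of_nat_diff)
  moreover have "key_avoid_prob X Y X \<le> key_avoid_prob X Y 1"
    using assms by (rule key_avoid_prob_antimono)
  ultimately show ?thesis
    using Y by (simp add: key_avoid_prob_key_size diff_divide_distrib)
qed

lemma rkg_edge_prob_le_1: "rkg_edge_prob X Y \<le> 1"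
  using key_avoid_prob_nonneg[of X] by (simp add: key_avoid_prob_key_size)

lemma rkg_edge_prob_pos:
  assumes "1 \<le> X"
  shows "0 < rkg_edge_prob X Y"
proof -
  have "0 < real X / real Y"
    using assms X_le_Y by simp
  then show ?thesis
    using rkg_edge_prob_ge[OF assms] by linarith
qed

end

section \<open>Asymptotics\<close>

lemma formula_in_bigo_ln_over_n:
  fixes q \<alpha> :: "nat \<Rightarrow> real" and c :: real
  assumes q: "eventually (\<lambda>n. q n = (ln (real n) + c * ln (ln (real n)) + \<alpha> n) / real n) at_top"
    and \<alpha>: "\<alpha> \<in> o(\<lambda>n. ln (real n))"
  shows "q \<in> O(\<lambda>n. ln (real n) / real n)"
proof -
  have "(\<lambda>n. ln (real n) + c * ln (ln (real n)) + \<alpha> n) \<in> O(\<lambda>n. ln (real n))"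
  proof (intro sum_in_bigo)
    show "(\<lambda>n. c * ln (ln (real n))) \<in> O(\<lambda>n. ln (real n))" by real_asymp
    show "\<alpha> \<in> O(\<lambda>n. ln (real n))" using \<alpha> by (rule landau_o.small_imp_big)
  qed simp
  then have "(\<lambda>n. (ln (real n) + c * ln (ln (real n)) + \<alpha> n) / real n) \<in> O(\<lambda>n. ln (real n) / real n)"
    by (rule landau_o.big.divide_right[rotated]) (simp add: eventually_gt_at_top)
  then show ?thesis
    using landau_o.big.in_cong[OF q] by simp
qed

lemma tendsto_0_of_bigo_ln_over_n:
  fixes q :: "nat \<Rightarrow> real"
  assumes q: "q \<in> O(\<lambda>n. ln (real n) / real n)"
  shows "(q \<longlongrightarrow> 0) at_top" and "((\<lambda>n. real n * q n ^ 2) \<longlongrightarrow> 0) at_top"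
proof -
  have "(\<lambda>n. ln (real n) / real n) \<in> o(\<lambda>_. 1)" by real_asymp
  with q have "q \<in> o(\<lambda>_. 1)" by (rule landau_o.big_small_trans)
  then show "(q \<longlongrightarrow> 0) at_top" by (auto dest: smalloD_tendsto)
  have "(\<lambda>n. real n * q n ^ 2) \<in> O(\<lambda>n. real n * (ln (real n) / real n) ^ 2)"
    by (intro landau_o.big.mult landau_o.big_power q) simp
  moreover have "(\<lambda>n. real n * (ln (real n) / real n) ^ 2) \<in> o(\<lambda>_. 1)" by real_asymp
  ultimately have "(\<lambda>n. real n * q n ^ 2) \<in> o(\<lambda>_. 1)" by (rule landau_o.big_small_trans)
  then show "((\<lambda>n. real n * q n ^ 2) \<longlongrightarrow> 0) at_top" by (auto dest: smalloD_tendsto)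
qed

lemma tendsto_binomial_over_power:
  "((\<lambda>n::nat. real ((n - c) choose h) / (real n ^ h / fact h)) \<longlongrightarrow> 1) at_top"
proof -
  have "((\<lambda>n::nat. real (n - (c + t)) / real n) \<longlongrightarrow> 1) at_top" for t
  proof -
    have "((\<lambda>n::nat. (real n - real (c + t)) / real n) \<longlongrightarrow> 1) at_top" by real_asymp
    moreover have "eventually (\<lambda>n. (real n - real (c + t)) / real n = real (n - (c + t)) / real n) at_top"
      using eventually_ge_at_top[of "c + t"] by eventually_elim (simp add: of_nat_diff)
    ultimately show ?thesis by (rule Lim_transform_eventually)
  qed
  then have "((\<lambda>n::nat. \<Prod>t<h. real (n - (c + t)) / real n) \<longlongrightarrow> (\<Prod>t<h. 1)) at_top"
    by (intro tendsto_prod)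
  moreover have "eventually (\<lambda>n. (\<Prod>t<h. real (n - (c + t)) / real n)
      = real ((n - c) choose h) / (real n ^ h / fact h)) at_top"
    using eventually_gt_at_top[of 0]
  proof eventually_elim
    case (elim n)
    have "real (((n - c) choose h) * fact h) = real (\<Prod>t<h. n - c - t)"
      by (simp only: binomial_mult_fact)
    then have "real ((n - c) choose h) * fact h = (\<Prod>t<h. real (n - (c + t)))"
      by (simp add: diff_diff_left)
    then show ?case
      using elim by (simp add: prod_dividef field_simps)
  qed
  ultimately show ?thesis
    by (simp add: Lim_transform_eventually)
qed

lemma tendsto_card_disjoint_subset_families:
  "((\<lambda>n. real (card (disjoint_subset_families m h {m..<n})) / (real n ^ (h * m) / fact h ^ m))
     \<longlongrightarrow> 1) at_top"
proof -
  have "real (card (disjoint_subset_families m h {m..<n})) / (real n ^ (h * m) / fact h ^ m)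
      = (\<Prod>i<m. real ((n - (m + i * h)) choose h) / (real n ^ h / fact h))" for n
    by (simp add: card_disjoint_subset_families prod_dividef power_mult power_divide prod.distrib)
  moreover have "((\<lambda>n. \<Prod>i<m. real ((n - (m + i * h)) choose h) / (real n ^ h / fact h))
      \<longlongrightarrow> (\<Prod>i<m. 1)) at_top"
    by (intro tendsto_prod tendsto_binomial_over_power)
  ultimately show ?thesis by simp
qed

lemma power_over_exp_upper:
  fixes x q :: real
  assumes x: "0 \<le> x" "x \<le> (1 - q) ^ m" and q: "q \<le> 1" and E: "E \<le> N"
  shows "x ^ E / exp (- (real m * real N * q)) \<le> exp (real m * q * (real N - real E))"
proof -
  have "x ^ E \<le> ((1 - q) ^ m) ^ E"
    using x by (intro power_mono) auto
  also have "\<dots> \<le> (exp (- q) ^ m) ^ E"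
    using q by (intro power_mono) (auto simp: add.commute[of 1] exp_ge_add_one_self[of "-q", simplified])
  also have "\<dots> = exp (- (real m * real E * q))"
    by (simp flip: exp_of_nat_mult power_mult add: mult_ac)
  finally have "x ^ E / exp (- (real m * real N * q))
      \<le> exp (- (real m * real E * q)) / exp (- (real m * real N * q))"
    by (rule divide_right_mono) simp
  also have "\<dots> = exp (real m * q * (real N - real E))"
    by (simp add: exp_diff[symmetric] algebra_simps)
  finally show ?thesis .
qed

lemma power_over_exp_lower:
  fixes x q :: real
  assumes x: "1 - real m * q \<le> x" and q: "0 \<le> q" "real m * q \<le> 1/2" and E: "E \<le> N"
  shows "exp (- 2 * real m ^ 2 * real N * q ^ 2) \<le> x ^ E / exp (- (real m * real N * q))"
proof -
  let ?t = "real m * q"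
  have t: "0 \<le> ?t" "?t \<le> 1/2"
    using q by simp_all
  have "0 \<le> 2 * ?t ^ 2" by simp
  then have "- ?t - 2 * ?t ^ 2 \<le> 0" using t by linarith
  then have "exp (real N * (- ?t - 2 * ?t ^ 2)) \<le> exp (real E * (- ?t - 2 * ?t ^ 2))"
    using E by (simp add: mult_right_mono_neg)
  also have "\<dots> \<le> exp (real E * ln (1 - ?t))"
    using ln_one_minus_pos_lower_bound[OF t] by (simp add: mult_left_mono)
  also have "\<dots> = (1 - ?t) ^ E"
    using t by (simp add: exp_of_nat_mult)
  also have "\<dots> \<le> x ^ E"
    using x t by (intro power_mono) auto
  finally have "exp (real N * (- ?t - 2 * ?t ^ 2)) \<le> x ^ E" .
  moreover have "exp (- 2 * real m ^ 2 * real N * q ^ 2)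
      = exp (real N * (- ?t - 2 * ?t ^ 2)) / exp (- (real m * real N * q))"
    by (simp add: exp_diff[symmetric] algebra_simps power2_eq_square)
  ultimately show ?thesis
    by (simp add: divide_right_mono)
qed

context
  fixes X Y :: "nat \<Rightarrow> nat" and m :: nat
  assumes key_sizes: "\<And>n. 1 \<le> X n \<and> X n \<le> Y n" and m_pos: "1 \<le> m"
    and edge_prob_to_0: "((\<lambda>n. rkg_edge_prob (X n) (Y n)) \<longlongrightarrow> 0) at_top"
begin

lemma eventually_keys_fit: "eventually (\<lambda>n. m * X n \<le> Y n) at_top"
proof -
  have "eventually (\<lambda>n. rkg_edge_prob (X n) (Y n) < 1 / real m) at_top"
    using order_tendstoD(2)[OF edge_prob_to_0, of "1 / real m"] m_pos by simp
  then show ?thesis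
  proof eventually_elim
    case (elim n)
    have "real (X n) / real (Y n) < 1 / real m"
      using rkg_edge_prob_ge[of "X n" "Y n"] key_sizes[of n] elim by simp
    then have "real m * real (X n) < real (Y n)"
      using key_sizes[of n] m_pos by (simp add: field_simps)
    then show ?case
      by (simp flip: of_nat_mult)
  qed
qed

lemma tendsto_prod_key_avoid_prob:
  "((\<lambda>n. \<Prod>i<m. key_avoid_prob (X n) (Y n) (i * X n)) \<longlongrightarrow> 1) at_top"
proof -
  have "((\<lambda>n. key_avoid_prob (X n) (Y n) (i * X n)) \<longlongrightarrow> 1) at_top" if "i < m" for i
  proof (rule tendsto_sandwich)
    show "eventually (\<lambda>n. 1 - real i * rkg_edge_prob (X n) (Y n)
        \<le> key_avoid_prob (X n) (Y n) (i * X n)) at_top"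
      using eventually_keys_fit
    proof eventually_elim
      case (elim n)
      then have "i * X n \<le> Y n"
        using that by (meson less_imp_le_nat mult_le_mono1 order_trans)
      then show ?case
        using key_sizes[of n] by (intro key_avoid_prob_lower) simp_all
    qed
    show "eventually (\<lambda>n. key_avoid_prob (X n) (Y n) (i * X n) \<le> 1) at_top"
      using key_sizes by (simp add: key_avoid_prob_le_1)
    show "((\<lambda>n. 1 - real i * rkg_edge_prob (X n) (Y n)) \<longlongrightarrow> 1) at_top"
      using tendsto_diff[OF tendsto_const tendsto_mult[OF tendsto_const edge_prob_to_0]] by simp
  qed simp
  then have "((\<lambda>n. \<Prod>i<m. key_avoid_prob (X n) (Y n) (i * X n)) \<longlongrightarrow> (\<Prod>i<m. 1)) at_top"
    by (intro tendsto_prod) simp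
  then show ?thesis by simp
qed

lemma tendsto_key_avoid_prob_diff_over_edge_prob:
  "((\<lambda>n. (key_avoid_prob (X n) (Y n) ((m - 1) * X n) - key_avoid_prob (X n) (Y n) (m * X n))
      / rkg_edge_prob (X n) (Y n)) \<longlongrightarrow> 1) at_top"
proof (rule tendsto_sandwich)
  define q where "q n = rkg_edge_prob (X n) (Y n)" for n
  define D where
    "D n = key_avoid_prob (X n) (Y n) ((m - 1) * X n) - key_avoid_prob (X n) (Y n) (m * X n)" for n
  have bounds: "(1 - (real m - 1) * q n) * q n \<le> D n \<and> D n \<le> q n" if fit: "m * X n \<le> Y n" for n
  proof -
    let ?a = "key_avoid_prob (X n) (Y n) ((m - 1) * X n)"
    let ?b = "key_avoid_prob (X n) (Y n) (m * X n)"
    have XY: "X n \<le> Y n" and X: "1 \<le> X n" using key_sizes by simp_all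
    have q: "key_avoid_prob (X n) (Y n) (X n) = 1 - q n"
      unfolding q_def by (rule key_avoid_prob_key_size[OF XY])
    have m: "(m - 1) * X n + X n = m * X n"
      using m_pos by (simp add: algebra_simps le_add_diff_inverse2 mult_eq_if)
    have "?a + (1 - q n) \<le> 1 + ?b"
      using key_avoid_prob_add_ge[OF XY, of "(m - 1) * X n" "X n"] fit m q by simp
    then have "D n \<le> q n"
      unfolding D_def by simp
    moreover have "?b \<le> ?a * (1 - q n)"
      using key_avoid_prob_add_le_mult[OF XY, of "(m - 1) * X n" "X n"] m q by simp
    then have "?a * q n \<le> D n"
      unfolding D_def by (simp add: algebra_simps)
    moreover have "1 - (real m - 1) * q n \<le> ?a"
      using key_avoid_prob_lower[OF XY, of "m - 1"] fit m m_pos unfolding q_def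
      by (simp add: of_nat_diff)
    then have "(1 - (real m - 1) * q n) * q n \<le> ?a * q n"
      using rkg_edge_prob_pos[OF XY X] unfolding q_def by (simp add: mult_right_mono)
    ultimately show ?thesis
      by linarith
  qed
  show "eventually (\<lambda>n. 1 - (real m - 1) * q n \<le> D n / q n) at_top"
    using eventually_keys_fit
    by eventually_elim (use bounds rkg_edge_prob_pos key_sizes in \<open>simp add: pos_le_divide_eq q_def\<close>)
  show "eventually (\<lambda>n. D n / q n \<le> 1) at_top"
    using eventually_keys_fit
    by eventually_elim (use bounds rkg_edge_prob_pos key_sizes in \<open>simp add: q_def\<close>)
  show "((\<lambda>n. 1 - (real m - 1) * q n) \<longlongrightarrow> 1) at_top"
    using tendsto_diff[OF tendsto_const tendsto_mult[OF tendsto_const edge_prob_to_0]]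
    unfolding q_def by simp
qed simp

lemma tendsto_key_avoid_prob_power_over_exp:
  assumes nq2: "((\<lambda>n. real n * rkg_edge_prob (X n) (Y n) ^ 2) \<longlongrightarrow> 0) at_top"
  shows "((\<lambda>n. key_avoid_prob (X n) (Y n) (m * X n) ^ (n - m - h * m)
      / exp (- (real m * real n * rkg_edge_prob (X n) (Y n)))) \<longlongrightarrow> 1) at_top"
proof (rule tendsto_sandwich)
  define q where "q n = rkg_edge_prob (X n) (Y n)" for n
  define F where "F n = key_avoid_prob (X n) (Y n) (m * X n) ^ (n - m - h * m)
      / exp (- (real m * real n * q n))" for n
  have "eventually (\<lambda>n. real m * q n < 1 / 2) at_top"
    using order_tendstoD(2)[OF tendsto_mult[OF tendsto_const edge_prob_to_0, of "real m"], of "1 / 2"]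
    unfolding q_def by simp
  then have ev: "eventually (\<lambda>n. m + h * m \<le> n \<and> m * X n \<le> Y n \<and> real m * q n \<le> 1 / 2) at_top"
    using eventually_ge_at_top[of "m + h * m"] eventually_keys_fit
    by eventually_elim simp
  show "eventually (\<lambda>n. exp (- 2 * real m ^ 2 * (real n * q n ^ 2)) \<le> F n) at_top"
    using ev
  proof eventually_elim
    case (elim n)
    have XY: "X n \<le> Y n" and X: "1 \<le> X n" using key_sizes by simp_all
    have "1 - real m * q n \<le> key_avoid_prob (X n) (Y n) (m * X n)"
      using elim unfolding q_def by (intro key_avoid_prob_lower XY) simp
    moreover have "0 \<le> q n"
      using rkg_edge_prob_pos[OF XY X] unfolding q_def by (simp add: less_imp_le)
    ultimately show ?case
      using power_over_exp_lower[where q = "q n" and E = "n - m - h * m" and N = n] elim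
      unfolding F_def by (simp add: mult_ac)
  qed
  show "eventually (\<lambda>n. F n \<le> exp (real m * q n * real (m + h * m))) at_top"
    using ev
  proof eventually_elim
    case (elim n)
    have XY: "X n \<le> Y n" and X: "1 \<le> X n" using key_sizes by simp_all
    have "q n \<le> 1"
      unfolding q_def by (rule rkg_edge_prob_le_1[OF XY])
    then show ?case
      using power_over_exp_upper[OF key_avoid_prob_nonneg[OF XY] key_avoid_prob_upper[OF XY],
          where E = "n - m - h * m" and N = n] elim
      unfolding F_def q_def by (simp add: of_nat_diff)
  qed
  show "((\<lambda>n. exp (- 2 * real m ^ 2 * (real n * q n ^ 2))) \<longlongrightarrow> 1) at_top"
    using tendsto_exp[OF tendsto_mult[OF tendsto_const[of "- 2 * real m ^ 2"] nq2]]
    unfolding q_def by simp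
  show "((\<lambda>n. exp (real m * q n * real (m + h * m))) \<longlongrightarrow> 1) at_top"
    using tendsto_exp[OF tendsto_mult[OF tendsto_mult[OF tendsto_const edge_prob_to_0] tendsto_const]]
    unfolding q_def by simp
qed

lemma rkg_event_prob_asymp_equiv:
  assumes nq2: "((\<lambda>n. real n * rkg_edge_prob (X n) (Y n) ^ 2) \<longlongrightarrow> 0) at_top"
  shows "(\<lambda>n. measure_pmf.prob (rkg_dist n (X n) (Y n)) (rkg_event n m h))
    \<sim>[at_top] (\<lambda>n. (real n * rkg_edge_prob (X n) (Y n)) ^ (h * m) / (fact h) ^ m
                   * exp (- (real m * real n * rkg_edge_prob (X n) (Y n))))"
proof (rule asymp_equivI')
  define q where "q n = rkg_edge_prob (X n) (Y n)" for n
  define p where "p n = key_avoid_prob (X n) (Y n)" for n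
  define P where "P n = (\<Prod>i<m. p n (i * X n))" for n
  define C where
    "C n = real (card (disjoint_subset_families m h {m..<n})) / (real n ^ (h * m) / fact h ^ m)" for n
  define D where "D n = (p n ((m - 1) * X n) - p n (m * X n)) / q n" for n
  define E where "E n = p n (m * X n) ^ (n - m - h * m) / exp (- (real m * real n * q n))" for n
  have "((\<lambda>n. P n * C n * D n ^ (h * m) * E n) \<longlongrightarrow> 1 * 1 * 1 ^ (h * m) * 1) at_top"
    unfolding P_def C_def D_def E_def p_def q_def
    by (intro tendsto_intros tendsto_prod_key_avoid_prob tendsto_card_disjoint_subset_families
        tendsto_key_avoid_prob_diff_over_edge_prob tendsto_key_avoid_prob_power_over_exp nq2)
  moreover have "eventually (\<lambda>n. P n * C n * D n ^ (h * m) * E n =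
      measure_pmf.prob (rkg_dist n (X n) (Y n)) (rkg_event n m h) /
      ((real n * q n) ^ (h * m) / fact h ^ m * exp (- (real m * real n * q n)))) at_top"
    using eventually_ge_at_top[of "m + h * m"]
  proof eventually_elim
    case (elim n)
    have "0 < real n" "0 < q n"
      using elim m_pos rkg_edge_prob_pos key_sizes unfolding q_def by simp_all
    then show ?case
      unfolding prob_rkg_event[OF conjunct2[OF key_sizes] elim] P_def C_def D_def E_def p_def
      by (simp add: power_divide power_mult_distrib field_simps)
  qed
  ultimately show "((\<lambda>n. measure_pmf.prob (rkg_dist n (X n) (Y n)) (rkg_event n m h) /
      ((real n * rkg_edge_prob (X n) (Y n)) ^ (h * m) / fact h ^ m
       * exp (- (real m * real n * rkg_edge_prob (X n) (Y n))))) \<longlongrightarrow> 1) at_top"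
    unfolding q_def by (simp add: Lim_transform_eventually)
qed

end

theorem mainTheorem9:
  fixes k m h :: nat and X Y :: "nat \<Rightarrow> nat" and \<alpha> :: "nat \<Rightarrow> real"
  assumes "k \<ge> 1" and "m \<ge> 1"
    and "\<And>n. 1 \<le> X n \<and> X n \<le> Y n"
    and "eventually (\<lambda>n. X n \<ge> 2) at_top"
    and "eventually (\<lambda>n. rkg_edge_prob (X n) (Y n)
            = (ln (real n) + (real k - 1) * ln (ln (real n)) + \<alpha> n) / real n) at_top"
    and "\<alpha> \<in> o(\<lambda>n. ln (real n))"
  shows "(\<lambda>n. measure_pmf.prob (rkg_dist n (X n) (Y n)) (rkg_event n m h))
    \<sim>[at_top] (\<lambda>n. (real n * rkg_edge_prob (X n) (Y n)) ^ (h * m) / (fact h) ^ m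
                   * exp (- (real m * real n * rkg_edge_prob (X n) (Y n))))"
proof -
  have "(\<lambda>n. rkg_edge_prob (X n) (Y n)) \<in> O(\<lambda>n. ln (real n) / real n)"
    using assms(5,6) by (rule formula_in_bigo_ln_over_n)
  note edge_prob_limits = tendsto_0_of_bigo_ln_over_n[OF this]
  show ?thesis
    using rkg_event_prob_asymp_equiv[OF assms(3) assms(2) edge_prob_limits] .
qed

end
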